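(* Let $r\geqslant 2$ and let $\mathcal{G}$ be a Newton graph of order $r$ on the torus $T$, with vertices $v_1,\dots,v_r$, faces $F_{r+1},\dots,F_{r+r}$, and edges $e_1,\dots,e_{2r}$. Let $\mathcal{G}^{*}$ be a geometric dual of $\mathcal{G}$, with vertex $v^{*}_{r+i}$ lying in $F_{r+i}$ and edge $e_k^{*}$ the dual edge crossing $e_k$. Put $\delta_i=\deg(v_i)$ and $\delta_i^{*}=\deg(v^{*}_{r+i})$, $i=1,\dots,r$. Then $$1<\delta_i\leqslant 2r,\qquad 1<\delta^{*}_i\leqslant 2r\quad (i=1,\dots,r),\qquad \sum_{i=1}^{r}\delta_i=\sum_{i=1}^{r}\delta^{*}_i=4r.$$ Moreover, the common refinement $\mathcal{G}\wedge\mathcal{G}^{*}$ has precisely $4r$ faces, and no vertex $s_k$ of $\mathcal{G}\wedge\mathcal{G}^{*}$ is connected by two edges of $\mathcal{G}\wedge\mathcal{G}^{*}$ to the same vertex $v_i$ or to the same vertex $v^{*}_{r+i}$.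
   Context: All graphs are cellular embeddings in the torus $T$ (each face homeomorphic to an open disk) of connected abstract multigraphs without loops, having $r$ vertices, $2r$ edges and hence $r$ faces; $r$ is the order. Such a graph has the E(Euler)-property if the boundary of each face, as a subgraph, is Eulerian: it admits a closed facial walk traversing each of its edges exactly once and passing through all its vertices (equivalently, every edge lies on the boundaries of two different faces, each traversed once). It has the A(angle)-property if to every sector of a face at a vertex on its boundary one can assign a well-defined strictly positive angle such that these angles sum up to $2\pi$ (around each vertex, and over the sectors of each face). A Newton graph is such a graph having both the A-property and the E-property. The geometric dual $\mathcal{G}^{*}$ has one vertex in each face of $\mathcal{G}$ and one edge $e_k^{*}$ crossing each edge $e_k$ of $\mathcal{G}$ exactly once; $\mathcal{G}^{*}$ is again a Newton graph of order $r$. The common refinement $\mathcal{G}\wedge\mathcal{G}^{*}$ is the embedded graph whose vertices are the vertices $v_i$ of $\mathcal{G}$, the crossing points $s_k$ of $e_k$ and $e_k^{*}$ ($k=1,\dots,2r$), and the vertices $v^{*}_{r+i}$ of $\mathcal{G}^{*}$; each $e_k$ (resp. $e_k^{*}$) is split into two edges of $\mathcal{G}\wedge\mathcal{G}^{*}$ joining $s_k$ to the two end vertices of $e_k$ (resp. $e_k^{*}$), and there are no other edges. *)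

theory Defs
  imports Complex_Main
begin

text \<open>
Combinatorial encoding of a cellular embedding of a connected loopless multigraph in
the (orientable) torus: an oriented combinatorial map (rotation system) on a finite
set of darts D (half-edges).  alpha is the fixed-point-free involution pairing the
two darts of an edge, sigma the counterclockwise rotation of darts around their
vertex.  Vertices, edges and faces are the orbits of sigma, alpha and sigma o alpha.
Faces are traversed keeping the face on the right.  The dart c also names the
sector (corner) at its vertex between c and sigma c; this sector lies in the face
containing alpha c.
\<close>

definition orb :: "('a \<Rightarrow> 'a) \<Rightarrow> 'a \<Rightarrow> 'a set" where
  "orb f x = range (\<lambda>n. (f ^^ n) x)"

definition cells :: "'a set \<Rightarrow> ('a \<Rightarrow> 'a) \<Rightarrow> 'a set set" where
  "cells D f = orb f ` D"

definition face_perm :: "('a \<Rightarrow> 'a) \<Rightarrow> ('a \<Rightarrow> 'a) \<Rightarrow> 'a \<Rightarrow> 'a" where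
  "face_perm \<alpha> \<sigma> = \<sigma> \<circ> \<alpha>"

definition map_connected :: "'a set \<Rightarrow> ('a \<Rightarrow> 'a) \<Rightarrow> ('a \<Rightarrow> 'a) \<Rightarrow> bool" where
  "map_connected D \<alpha> \<sigma> \<longleftrightarrow>
     (\<forall>x\<in>D. \<forall>y\<in>D. (x, y) \<in> ({(z, \<alpha> z) | z. z \<in> D} \<union> {(z, \<sigma> z) | z. z \<in> D})\<^sup>*)"

definition torus_map :: "'a set \<Rightarrow> ('a \<Rightarrow> 'a) \<Rightarrow> ('a \<Rightarrow> 'a) \<Rightarrow> bool" where
  "torus_map D \<alpha> \<sigma> \<longleftrightarrow>
     finite D \<and> D \<noteq> {} \<and>
     (\<forall>d\<in>D. \<alpha> d \<in> D \<and> \<alpha> (\<alpha> d) = d \<and> \<alpha> d \<noteq> d) \<and>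
     bij_betw \<sigma> D D \<and>
     map_connected D \<alpha> \<sigma> \<and>
     int (card (cells D \<sigma>)) - int (card (cells D \<alpha>)) + int (card (cells D (face_perm \<alpha> \<sigma>))) = 0"

definition no_loops :: "'a set \<Rightarrow> ('a \<Rightarrow> 'a) \<Rightarrow> ('a \<Rightarrow> 'a) \<Rightarrow> bool" where
  "no_loops D \<alpha> \<sigma> \<longleftrightarrow> (\<forall>d\<in>D. \<alpha> d \<notin> orb \<sigma> d)"

definition E_property :: "'a set \<Rightarrow> ('a \<Rightarrow> 'a) \<Rightarrow> ('a \<Rightarrow> 'a) \<Rightarrow> bool" where
  "E_property D \<alpha> \<sigma> \<longleftrightarrow> (\<forall>d\<in>D. orb (face_perm \<alpha> \<sigma>) (\<alpha> d) \<noteq> orb (face_perm \<alpha> \<sigma>) d)"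

definition A_property :: "'a set \<Rightarrow> ('a \<Rightarrow> 'a) \<Rightarrow> ('a \<Rightarrow> 'a) \<Rightarrow> bool" where
  "A_property D \<alpha> \<sigma> \<longleftrightarrow>
     (\<exists>\<theta> :: 'a \<Rightarrow> real.
        (\<forall>c\<in>D. 0 < \<theta> c) \<and>
        (\<forall>v\<in>cells D \<sigma>. (\<Sum>c\<in>v. \<theta> c) = 2 * pi) \<and>
        (\<forall>F\<in>cells D (face_perm \<alpha> \<sigma>). (\<Sum>c\<in>{c\<in>D. \<alpha> c \<in> F}. \<theta> c) = 2 * pi))"

definition newton_graph :: "'a set \<Rightarrow> ('a \<Rightarrow> 'a) \<Rightarrow> ('a \<Rightarrow> 'a) \<Rightarrow> nat \<Rightarrow> bool" where
  "newton_graph D \<alpha> \<sigma> r \<longleftrightarrow>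
     torus_map D \<alpha> \<sigma> \<and> no_loops D \<alpha> \<sigma> \<and>
     card (cells D \<sigma>) = r \<and> card (cells D \<alpha>) = 2 * r \<and>
     E_property D \<alpha> \<sigma> \<and> A_property D \<alpha> \<sigma>"

text \<open>Geometric dual: same darts and edge involution; the dual vertex in a face
  has counterclockwise rotation the inverse of the face permutation.\<close>
definition dual_rot :: "'a set \<Rightarrow> ('a \<Rightarrow> 'a) \<Rightarrow> ('a \<Rightarrow> 'a) \<Rightarrow> 'a \<Rightarrow> 'a" where
  "dual_rot D \<alpha> \<sigma> = inv_into D (face_perm \<alpha> \<sigma>)"

text \<open>For each dart d (at vertex v, edge e) there are
  four darts: (d,0) = half of e at v, (d,1) = the same segment at s_e,
  (d,2) = the segment of e* from the face containing d, at that dual vertex,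
  (d,3) = the same segment at s_e.\<close>
definition ref_darts :: "'a set \<Rightarrow> ('a \<times> nat) set" where
  "ref_darts D = D \<times> {0, 1, 2, 3}"

definition ref_alpha :: "'a \<times> nat \<Rightarrow> 'a \<times> nat" where
  "ref_alpha x = (case x of (d, k) \<Rightarrow>
     if k = 0 then (d, 1) else if k = 1 then (d, 0) else if k = 2 then (d, 3) else (d, 2))"

definition ref_sigma :: "'a set \<Rightarrow> ('a \<Rightarrow> 'a) \<Rightarrow> ('a \<Rightarrow> 'a) \<Rightarrow> 'a \<times> nat \<Rightarrow> 'a \<times> nat" where
  "ref_sigma D \<alpha> \<sigma> x = (case x of (d, k) \<Rightarrow>
     if k = 0 then (\<sigma> d, 0)
     else if k = 1 then (d, 3)
     else if k = 3 then (\<alpha> d, 1)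
     else (dual_rot D \<alpha> \<sigma> d, 2))"

end

theory Submission
  imports Defs
begin

text \<open>
  The darts of a map with 2r edges are 4r in number.  The degrees of G and of G* are the orbit
  sizes of the rotation \<sigma> and of the face permutation \<phi> = \<sigma> \<circ> \<alpha> (whose inverse rotates G*),
  so each family of degrees partitions the darts and sums to 4r.  As also \<sigma> = \<phi> \<circ> \<alpha>, a fixed
  point of either permutation yields a loop of the other map; the E-property says precisely
  that G* has no loops, so all degrees exceed 1.  In a loop-free map \<alpha> sends every vertex
  into its complement, so a degree is at most half the number of darts, i.e. 2r.
  Each face of G \<and> G* is a quadrilateral v, s, v*, s' determined by one dart, giving 4r faces,
  and the four neighbours of a crossing s_k are the ends of e_k and of e*_k, which are distinct
  because neither G nor G* has loops.
\<close>

section \<open>Orbits\<close>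

lemma self_in_orb [simp]: "x \<in> orb f x"
  unfolding orb_def by (rule range_eqI[of _ _ 0]) simp

lemma orb_nonempty [simp]: "orb f x \<noteq> {}"
  using self_in_orb by (metis empty_iff)

lemma apply_in_orb [simp]: "f x \<in> orb f x"
  unfolding orb_def by (rule range_eqI[of _ _ 1]) simp

lemma orb_subset_orb:
  assumes "y \<in> orb f x"
  shows "orb f y \<subseteq> orb f x"
proof
  fix z
  assume "z \<in> orb f y"
  then obtain m n where "y = (f ^^ n) x" "z = (f ^^ m) y"
    using assms unfolding orb_def by blast
  then have "z = (f ^^ (m + n)) x"
    by (simp add: funpow_add)
  then show "z \<in> orb f x"
    unfolding orb_def by blast
qed

lemma orb_subset_if_bij_betw: "bij_betw f D D \<Longrightarrow> x \<in> D \<Longrightarrow> orb f x \<subseteq> D"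
  unfolding orb_def using bij_betw_funpow bij_betwE by blast

lemma orb_image_commute:
  assumes "\<And>x. f (g x) = g (h x)"
  shows "orb f (g x) = g ` orb h x"
proof -
  have "(f ^^ n) (g x) = g ((h ^^ n) x)" for n
    by (induction n) (simp_all add: assms)
  then show ?thesis
    unfolding orb_def by (simp add: image_image)
qed

lemma orb_eq_image_if_periodic:
  assumes "0 < p" "(f ^^ p) x = x"
  shows "orb f x = (\<lambda>k. (f ^^ k) x) ` {..<p}"
proof
  show "orb f x \<subseteq> (\<lambda>k. (f ^^ k) x) ` {..<p}"
  proof
    fix y
    assume "y \<in> orb f x"
    then obtain n where "y = (f ^^ n) x"
      unfolding orb_def by blast
    then have "y = (f ^^ (n mod p)) x"
      using funpow_mod_eq[OF assms(2)] by simp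
    then show "y \<in> (\<lambda>k. (f ^^ k) x) ` {..<p}"
      using assms(1) by simp
  qed
qed (auto simp: orb_def)

lemma orb_eq_if_periodic:
  assumes "0 < p" "(f ^^ p) x = x" "y \<in> orb f x"
  shows "orb f y = orb f x"
proof
  show "orb f y \<subseteq> orb f x"
    using assms(3) by (rule orb_subset_orb)
  obtain n where y: "y = (f ^^ n) x"
    using assms(3) unfolding orb_def by blast
  have "p * n - n + n = p * n"
    using assms(1) by simp
  then have "(f ^^ (p * n - n)) y = (f ^^ (p * n)) x"
    by (metis y funpow_add comp_apply)
  also have "\<dots> = x"
    using funpow_mod_eq[OF assms(2), of "p * n"] by simp
  finally have "x \<in> orb f y"
    unfolding orb_def by (metis rangeI)
  then show "orb f x \<subseteq> orb f y"
    by (rule orb_subset_orb)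
qed

lemma periodic_if_bij_betw:
  assumes "finite D" "bij_betw f D D" "x \<in> D"
  obtains p where "0 < p" "(f ^^ p) x = x"
proof -
  define g where "g y = (if y \<in> D then f y else y)" for y
  have "(f ^^ n) x \<in> D" for n
    using assms(2,3) bij_betw_funpow bij_betwE by metis
  then have g_funpow: "(g ^^ n) x = (f ^^ n) x" for n
    by (induction n) (simp_all add: g_def)
  have "inj g"
    using assms(2) unfolding g_def inj_def bij_betw_def by (metis image_eqI inj_onD)
  moreover have "finite {y. \<exists>n. y = (g ^^ n) x}"
    using assms(1) \<open>\<And>n. (f ^^ n) x \<in> D\<close> g_funpow by (auto intro: finite_subset)
  ultimately obtain p where "0 < p" "(g ^^ p) x = x"
    by (rule funpow_inj_finite)
  then show thesis
    using that g_funpow by simp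
qed

lemma orb_eq_if_bij_betw:
  assumes "finite D" "bij_betw f D D" "x \<in> D" "y \<in> orb f x"
  shows "orb f y = orb f x"
  using periodic_if_bij_betw[OF assms(1-3)] orb_eq_if_periodic assms(4) by metis

lemma Union_cells: "bij_betw f D D \<Longrightarrow> \<Union> (cells D f) = D"
  unfolding cells_def using orb_subset_if_bij_betw self_in_orb by (metis UN_subset_iff UN_I subsetI subset_antisym)

lemma pairwise_disjnt_cells:
  assumes "finite D" "bij_betw f D D"
  shows "pairwise disjnt (cells D f)"
proof (rule pairwiseI)
  fix A B
  assume "A \<in> cells D f" "B \<in> cells D f" "A \<noteq> B"
  then obtain x y where "x \<in> D" "y \<in> D" "A = orb f x" "B = orb f y"
    unfolding cells_def by blast
  then show "disjnt A B"
    using \<open>A \<noteq> B\<close> orb_eq_if_bij_betw[OF assms] unfolding disjnt_def by (metis disjoint_iff)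
qed

lemma sum_card_cells:
  assumes "finite D" "bij_betw f D D"
  shows "(\<Sum>c\<in>cells D f. card c) = card D"
proof -
  have "finite c" if "c \<in> cells D f" for c
    using that Union_cells[OF assms(2)] assms(1) by (metis Union_upper finite_subset)
  then have "card (\<Union> (cells D f)) = (\<Sum>c\<in>cells D f. card c)"
    by (rule card_Union_disjoint[OF pairwise_disjnt_cells[OF assms]])
  then show ?thesis
    using Union_cells[OF assms(2)] by simp
qed

lemma funpow_right_inverse:
  assumes "\<forall>x\<in>D. f (g x) = x" "\<forall>x\<in>D. g x \<in> D" "x \<in> D"
  shows "(f ^^ n) ((g ^^ n) x) = x"
  using assms(3)
proof (induction n arbitrary: x)
  case (Suc n)
  have "(f ^^ Suc n) ((g ^^ Suc n) x) = f ((f ^^ n) ((g ^^ n) (g x)))"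
    by (simp add: funpow_swap1)
  also have "\<dots> = x"
    using Suc assms(1,2) by simp
  finally show ?case .
qed simp

lemma orb_subset_if_right_inverse:
  assumes "finite D" "bij_betw f D D" "\<forall>x\<in>D. f (g x) = x" "\<forall>x\<in>D. g x \<in> D" "x \<in> D"
  shows "orb g x \<subseteq> orb f x"
proof
  fix y
  assume "y \<in> orb g x"
  then obtain n where y: "y = (g ^^ n) x"
    unfolding orb_def by blast
  have "y \<in> D"
    using y assms(4,5) by (induction n arbitrary: y) auto
  moreover have "x \<in> orb f y"
    using funpow_right_inverse[OF assms(3-5)] y unfolding orb_def by (metis rangeI)
  ultimately show "y \<in> orb f x"
    using orb_eq_if_bij_betw[OF assms(1,2)] self_in_orb by metis
qed

lemma orb_inv_into:
  assumes "finite D" "bij_betw f D D" "x \<in> D"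
  shows "orb (inv_into D f) x = orb f x"
proof
  have bij_inv: "bij_betw (inv_into D f) D D"
    using assms(2) by (rule bij_betw_inv_into)
  then have inv_in: "\<forall>x\<in>D. inv_into D f x \<in> D" "\<forall>x\<in>D. f x \<in> D"
    using assms(2) bij_betwE by blast+
  have "\<forall>x\<in>D. f (inv_into D f x) = x" "\<forall>x\<in>D. inv_into D f (f x) = x"
    using assms(2) f_inv_into_f[of _ f D] inv_into_f_f[of f D] unfolding bij_betw_def by simp_all
  then show "orb (inv_into D f) x \<subseteq> orb f x" "orb f x \<subseteq> orb (inv_into D f) x"
    using orb_subset_if_right_inverse[OF assms(1,2) _ inv_in(1) assms(3)]
      orb_subset_if_right_inverse[OF assms(1) bij_inv _ inv_in(2) assms(3)]
    by blast+
qed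

lemma card_orb_gt_1:
  assumes "finite D" "bij_betw f D D" "x \<in> D" "f x \<noteq> x"
  shows "1 < card (orb f x)"
proof -
  have "finite (orb f x)"
    using assms(1) orb_subset_if_bij_betw[OF assms(2,3)] by (rule finite_subset[rotated])
  then have "card {x, f x} \<le> card (orb f x)"
    by (rule card_mono) simp
  then show ?thesis
    using assms(4) by simp
qed

lemma double_card_le_if_inj_into_complement:
  assumes "finite D" "inj_on a D" "A \<subseteq> D" "a ` A \<subseteq> D - A"
  shows "2 * card A \<le> card D"
proof -
  have "card A = card (a ` A)"
    using assms(2,3) by (simp add: card_image inj_on_subset)
  also have "\<dots> \<le> card (D - A)"
    using assms(1,4) by (simp add: card_mono)
  also have "\<dots> = card D - card A"
    using assms(1,3) by (simp add: card_Diff_subset finite_subset)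
  finally show ?thesis
    using assms(1,3) card_mono by fastforce
qed

lemma orb_eq_if_involution:
  assumes "f (f x) = x"
  shows "orb f x = {x, f x}"
proof -
  have "(f ^^ 2) x = x" "{..<2::nat} = {0, 1}"
    using assms by (auto simp: numeral_2_eq_2)
  then show ?thesis
    using orb_eq_image_if_periodic[of 2 f x] by (simp add: numeral_2_eq_2)
qed

lemma funpow_4: "(f ^^ 4) x = f (f (f (f x)))"
  by (simp add: eval_nat_numeral)

lemma orb_eq_if_funpow_4:
  assumes "(f ^^ 4) x = x"
  shows "orb f x = {x, f x, f (f x), f (f (f x))}"
proof -
  have "{..<4::nat} = {0, 1, 2, 3}"
    by auto
  then show ?thesis
    using orb_eq_image_if_periodic[of 4 f x] assms by (simp add: eval_nat_numeral)
qed

section \<open>Rotation systems and their duals\<close>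

locale rotation_system =
  fixes D :: "'a set" and \<alpha> \<sigma> :: "'a \<Rightarrow> 'a"
  assumes finite_darts: "finite D"
    and alpha_in: "d \<in> D \<Longrightarrow> \<alpha> d \<in> D"
    and alpha_alpha: "d \<in> D \<Longrightarrow> \<alpha> (\<alpha> d) = d"
    and alpha_neq: "d \<in> D \<Longrightarrow> \<alpha> d \<noteq> d"
    and bij_sigma: "bij_betw \<sigma> D D"
begin

abbreviation \<phi> where "\<phi> \<equiv> face_perm \<alpha> \<sigma>"

abbreviation \<rho> where "\<rho> \<equiv> dual_rot D \<alpha> \<sigma>"

lemma bij_alpha: "bij_betw \<alpha> D D"
  by (rule bij_betw_byWitness[where f' = \<alpha>]) (auto simp: alpha_alpha alpha_in)

lemma inj_on_alpha: "inj_on \<alpha> D"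
  using bij_alpha bij_betw_def by blast

lemma bij_face_perm: "bij_betw \<phi> D D"
  unfolding face_perm_def using bij_alpha bij_sigma by (rule bij_betw_trans)

lemma sigma_eq_face_perm_alpha: "d \<in> D \<Longrightarrow> \<sigma> d = \<phi> (\<alpha> d)"
  by (simp add: face_perm_def alpha_alpha)

lemma face_perm_dual_rot: "d \<in> D \<Longrightarrow> \<phi> (\<rho> d) = d"
  unfolding dual_rot_def using bij_face_perm
  by (simp add: bij_betw_imp_surj_on f_inv_into_f)

lemma dual_rot_face_perm: "d \<in> D \<Longrightarrow> \<rho> (\<phi> d) = d"
  unfolding dual_rot_def using bij_face_perm by (simp add: bij_betw_def inv_into_f_f)

lemma face_perm_in: "d \<in> D \<Longrightarrow> \<phi> d \<in> D"
  using bij_face_perm bij_betwE by blast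

lemma orb_dual_rot: "d \<in> D \<Longrightarrow> orb \<rho> d = orb \<phi> d"
  unfolding dual_rot_def using finite_darts bij_face_perm by (rule orb_inv_into)

lemma cells_dual_rot: "cells D \<rho> = cells D \<phi>"
  unfolding cells_def using orb_dual_rot by simp

lemma card_darts: "card D = 2 * card (cells D \<alpha>)"
proof -
  have "card c = 2" if c: "c \<in> cells D \<alpha>" for c
  proof -
    obtain d where d: "d \<in> D" "c = orb \<alpha> d"
      using c unfolding cells_def by blast
    then have "c = {d, \<alpha> d}"
      using orb_eq_if_involution alpha_alpha by metis
    then show ?thesis
      using alpha_neq[OF d(1)] by (simp add: eq_commute)
  qed
  then show ?thesis
    using sum_card_cells[OF finite_darts bij_alpha] by simp
qed

lemma E_property_iff: "E_property D \<alpha> \<sigma> \<longleftrightarrow> (\<forall>d\<in>D. \<alpha> d \<notin> orb \<phi> d)"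
  unfolding E_property_def
  using orb_eq_if_bij_betw[OF finite_darts bij_face_perm] self_in_orb alpha_in by metis

lemma apply_alpha_neq_if_no_loops:
  assumes "bij_betw f D D" "\<forall>d\<in>D. \<alpha> d \<notin> orb f d" "d \<in> D"
  shows "f (\<alpha> d) \<noteq> d"
proof
  assume "f (\<alpha> d) = d"
  then have "orb f d = orb f (\<alpha> d)"
    using orb_eq_if_bij_betw[OF finite_darts assms(1)] alpha_in assms(3) apply_in_orb by metis
  then show False
    using assms(2,3) self_in_orb by metis
qed

lemma card_orb_bounds_if_no_loops:
  assumes "bij_betw f D D" "\<forall>d\<in>D. \<alpha> d \<notin> orb f d" "d \<in> D" "f d \<noteq> d"
  shows "1 < card (orb f d) \<and> 2 * card (orb f d) \<le> card D"
proof
  show "1 < card (orb f d)"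
    using finite_darts assms(1,3,4) by (rule card_orb_gt_1)
  have "orb f d \<subseteq> D"
    using assms(1,3) by (rule orb_subset_if_bij_betw)
  moreover have "\<alpha> x \<notin> orb f d" if "x \<in> orb f d" for x
    using that assms orb_eq_if_bij_betw[OF finite_darts] \<open>orb f d \<subseteq> D\<close> by blast
  ultimately show "2 * card (orb f d) \<le> card D"
    using double_card_le_if_inj_into_complement[OF finite_darts inj_on_alpha] alpha_in by blast
qed

lemma card_vertex_bounds:
  assumes "no_loops D \<alpha> \<sigma>" "E_property D \<alpha> \<sigma>" "v \<in> cells D \<sigma>"
  shows "1 < card v \<and> 2 * card v \<le> card D"
proof -
  obtain d where d: "d \<in> D" "v = orb \<sigma> d"
    using assms(3) unfolding cells_def by blast
  have "\<sigma> d \<noteq> d"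
    using apply_alpha_neq_if_no_loops[OF bij_face_perm] assms(2) d(1)
    by (simp add: E_property_iff sigma_eq_face_perm_alpha)
  then show ?thesis
    using card_orb_bounds_if_no_loops[OF bij_sigma] assms(1) d unfolding no_loops_def by blast
qed

lemma card_dual_vertex_bounds:
  assumes "no_loops D \<alpha> \<sigma>" "E_property D \<alpha> \<sigma>" "w \<in> cells D \<rho>"
  shows "1 < card w \<and> 2 * card w \<le> card D"
proof -
  obtain d where d: "d \<in> D" "w = orb \<phi> d"
    using assms(3) orb_dual_rot unfolding cells_def by auto
  have "\<phi> d \<noteq> d"
    using apply_alpha_neq_if_no_loops[OF bij_sigma] assms(1) d(1)
    unfolding no_loops_def face_perm_def comp_apply .
  then show ?thesis
    using card_orb_bounds_if_no_loops[OF bij_face_perm] assms(2) d unfolding E_property_iff by simp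
qed

end

section \<open>The common refinement\<close>

(* The refined darts are tagged by 0, 1, 2, 3; without this, simp would turn the tag 1 into
   Suc 0 and the rewrite rules below would no longer match. *)
declare One_nat_def [simp del]

lemma tagged_image_eq_iff:
  "(\<lambda>x. (x, k)) ` A = (\<lambda>x. (x, l)) ` B \<longleftrightarrow> A = B \<and> (A = {} \<or> k = l)"
  by blast

lemma ref_alpha_simps [simp]:
  "ref_alpha (d, 0) = (d, 1)" "ref_alpha (d, 1) = (d, 0)"
  "ref_alpha (d, 2) = (d, 3)" "ref_alpha (d, 3) = (d, 2)"
  by (simp_all add: ref_alpha_def)

lemma ref_sigma_simps [simp]:
  "ref_sigma D \<alpha> \<sigma> (d, 0) = (\<sigma> d, 0)" "ref_sigma D \<alpha> \<sigma> (d, 1) = (d, 3)"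
  "ref_sigma D \<alpha> \<sigma> (d, 2) = (dual_rot D \<alpha> \<sigma> d, 2)" "ref_sigma D \<alpha> \<sigma> (d, 3) = (\<alpha> d, 1)"
  by (simp_all add: ref_sigma_def)

context rotation_system
begin

abbreviation ref_face_perm where "ref_face_perm \<equiv> face_perm ref_alpha (ref_sigma D \<alpha> \<sigma>)"

lemma ref_face_perm_funpow_4: "d \<in> D \<Longrightarrow> (ref_face_perm ^^ 4) (d, 0) = (d, 0)"
  unfolding funpow_4 using face_perm_dual_rot by (simp add: face_perm_def)

lemma orb_ref_face_perm:
  "d \<in> D \<Longrightarrow> orb ref_face_perm (d, 0) = {(d, 0), (d, 3), (\<rho> d, 2), (\<alpha> (\<rho> d), 1)}"
  by (simp add: ref_face_perm_funpow_4 orb_eq_if_funpow_4) (simp add: face_perm_def)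

lemma ref_dart_in_ref_face:
  assumes "d \<in> D" "k \<in> {0, 1, 2, 3}"
  obtains e where "e \<in> D" "(d, k) \<in> orb ref_face_perm (e, 0)"
proof -
  have "(d, 0) \<in> orb ref_face_perm (d, 0)" "(d, 3) \<in> orb ref_face_perm (d, 0)"
    "(d, 2) \<in> orb ref_face_perm (\<phi> d, 0)" "(d, 1) \<in> orb ref_face_perm (\<phi> (\<alpha> d), 0)"
    using assms(1) by (simp_all add: orb_ref_face_perm face_perm_in alpha_in dual_rot_face_perm alpha_alpha)
  then show thesis
    using that assms face_perm_in alpha_in by auto
qed

lemma cells_ref_face_perm: "cells (ref_darts D) ref_face_perm = (\<lambda>d. orb ref_face_perm (d, 0)) ` D"
proof
  show "(\<lambda>d. orb ref_face_perm (d, 0)) ` D \<subseteq> cells (ref_darts D) ref_face_perm"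
    unfolding cells_def ref_darts_def by (intro image_subsetI imageI) blast
  show "cells (ref_darts D) ref_face_perm \<subseteq> (\<lambda>d. orb ref_face_perm (d, 0)) ` D"
  proof
    fix c
    assume "c \<in> cells (ref_darts D) ref_face_perm"
    then obtain d k where dk: "d \<in> D" "k \<in> {0, 1, 2, 3}" "c = orb ref_face_perm (d, k)"
      unfolding cells_def ref_darts_def by blast
    obtain e where e: "e \<in> D" "(d, k) \<in> orb ref_face_perm (e, 0)"
      using ref_dart_in_ref_face[OF dk(1,2)] .
    then have "c = orb ref_face_perm (e, 0)"
      using orb_eq_if_periodic[OF _ ref_face_perm_funpow_4 e(2)] dk(3) by simp
    then show "c \<in> (\<lambda>d. orb ref_face_perm (d, 0)) ` D"
      using e(1) by blast
  qed
qed

lemma card_ref_faces: "card (cells (ref_darts D) ref_face_perm) = card D"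
proof -
  have "inj_on (\<lambda>d. orb ref_face_perm (d, 0)) D"
  proof (rule inj_onI)
    fix d e
    assume "d \<in> D" "e \<in> D" "orb ref_face_perm (d, 0) = orb ref_face_perm (e, 0)"
    then have "(d, 0) \<in> {(e, 0), (e, 3), (\<rho> e, 2), (\<alpha> (\<rho> e), 1::nat)}"
      using self_in_orb orb_ref_face_perm by metis
    then show "d = e"
      by simp
  qed
  then show ?thesis
    by (simp add: cells_ref_face_perm card_image)
qed

lemma orb_ref_sigma_crossing:
  "d \<in> D \<Longrightarrow> orb (ref_sigma D \<alpha> \<sigma>) (d, 1) = {(d, 1), (d, 3), (\<alpha> d, 1), (\<alpha> d, 3)}"
  by (simp add: orb_eq_if_funpow_4 funpow_4 alpha_alpha)

lemma orb_ref_sigma_vertex: "orb (ref_sigma D \<alpha> \<sigma>) (d, 0) = (\<lambda>x. (x, 0)) ` orb \<sigma> d"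
  by (rule orb_image_commute) simp

lemma orb_ref_sigma_dual_vertex: "orb (ref_sigma D \<alpha> \<sigma>) (d, 2) = (\<lambda>x. (x, 2)) ` orb \<rho> d"
  by (rule orb_image_commute) simp

lemma ref_crossing_neighbours_distinct:
  assumes "no_loops D \<alpha> \<sigma>" "E_property D \<alpha> \<sigma>" "d \<in> D"
    and "y \<in> orb (ref_sigma D \<alpha> \<sigma>) (d, 1)" "z \<in> orb (ref_sigma D \<alpha> \<sigma>) (d, 1)" "y \<noteq> z"
  shows "orb (ref_sigma D \<alpha> \<sigma>) (ref_alpha y) \<noteq> orb (ref_sigma D \<alpha> \<sigma>) (ref_alpha z)"
proof -
  define vertex where "vertex y = orb (ref_sigma D \<alpha> \<sigma>) (ref_alpha y)" for y
  have "orb \<sigma> d \<noteq> orb \<sigma> (\<alpha> d)"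
    using assms(1,3) self_in_orb unfolding no_loops_def by metis
  moreover have "orb \<rho> d \<noteq> orb \<rho> (\<alpha> d)"
    using assms(2,3) self_in_orb alpha_in unfolding E_property_iff by (metis orb_dual_rot)
  ultimately have "distinct (map vertex [(d, 1), (d, 3), (\<alpha> d, 1), (\<alpha> d, 3)])"
    by (simp add: vertex_def orb_ref_sigma_vertex orb_ref_sigma_dual_vertex tagged_image_eq_iff)
  then have "inj_on vertex (set [(d, 1), (d, 3), (\<alpha> d, 1), (\<alpha> d, 3)])"
    by (simp only: distinct_map)
  then have "inj_on vertex (orb (ref_sigma D \<alpha> \<sigma>) (d, 1))"
    by (simp add: orb_ref_sigma_crossing[OF assms(3)])
  then show ?thesis
    using assms(4-6) unfolding vertex_def inj_on_def by blast
qed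

end

lemma rotation_system_if_torus_map: "torus_map D \<alpha> \<sigma> \<Longrightarrow> rotation_system D \<alpha> \<sigma>"
  unfolding torus_map_def by unfold_locales blast+

theorem lemma2p1:
  fixes D :: "'a set" and \<alpha> \<sigma> :: "'a \<Rightarrow> 'a" and r :: nat
  assumes "r \<ge> 2"
    and "newton_graph D \<alpha> \<sigma> r"
  shows "(\<forall>v\<in>cells D \<sigma>. 1 < card v \<and> card v \<le> 2 * r)
       \<and> (\<forall>w\<in>cells D (dual_rot D \<alpha> \<sigma>). 1 < card w \<and> card w \<le> 2 * r)
       \<and> (\<Sum>v\<in>cells D \<sigma>. card v) = 4 * r
       \<and> (\<Sum>w\<in>cells D (dual_rot D \<alpha> \<sigma>). card w) = 4 * r
       \<and> card (cells (ref_darts D) (face_perm ref_alpha (ref_sigma D \<alpha> \<sigma>))) = 4 * r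
       \<and> (\<forall>d\<in>D. \<forall>y\<in>orb (ref_sigma D \<alpha> \<sigma>) (d, 1). \<forall>z\<in>orb (ref_sigma D \<alpha> \<sigma>) (d, 1).
            y \<noteq> z \<longrightarrow> orb (ref_sigma D \<alpha> \<sigma>) (ref_alpha y) \<noteq> orb (ref_sigma D \<alpha> \<sigma>) (ref_alpha z))"
proof -
  from assms(2) have map: "torus_map D \<alpha> \<sigma>" and loops: "no_loops D \<alpha> \<sigma>"
    and E: "E_property D \<alpha> \<sigma>" and edges: "card (cells D \<alpha>) = 2 * r"
    unfolding newton_graph_def by blast+
  interpret rotation_system D \<alpha> \<sigma>
    using map by (rule rotation_system_if_torus_map)
  have darts: "card D = 4 * r"
    using card_darts edges by simp
  have "\<forall>v\<in>cells D \<sigma>. 1 < card v \<and> card v \<le> 2 * r"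
    using card_vertex_bounds[OF loops E] darts by fastforce
  moreover have "\<forall>w\<in>cells D \<rho>. 1 < card w \<and> card w \<le> 2 * r"
    using card_dual_vertex_bounds[OF loops E] darts by fastforce
  moreover have "(\<Sum>v\<in>cells D \<sigma>. card v) = 4 * r" "(\<Sum>w\<in>cells D \<rho>. card w) = 4 * r"
    using sum_card_cells[OF finite_darts bij_sigma] sum_card_cells[OF finite_darts bij_face_perm]
    by (simp_all add: darts cells_dual_rot)
  ultimately show ?thesis
    using card_ref_faces ref_crossing_neighbours_distinct[OF loops E] unfolding darts by blast
qed

end
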